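(* For $\mathrm{Re}\,s>0$ one has $\widetilde F(s)=\frac{K_s(2)}{sK_0(2)}$. Hence $\widetilde F$ extends meromorphically to $\mathbb C$ with a single pole, a simple pole at $s=0$ with residue $1$; $\widetilde F$ is odd; and for all real $\sigma_1\le\sigma_2$ there is $C=C(\sigma_1,\sigma_2)$ with $|\widetilde F(s)|\le C|s|^{|\sigma|-1}e^{-\pi|t|/2}$ for all $s=\sigma+it\neq0$ with $\sigma_1\le\sigma\le\sigma_2$.
   Context: $K_s(y)=\frac12\int_0^\infty e^{-y(t+1/t)/2}t^{s-1}dt$. $F(x)=\frac{1}{2K_0(2)}\int_x^\infty e^{-t-1/t}\frac{dt}{t}$ for $x\ge0$, and $\widetilde F(s)=\int_0^\infty F(t)t^{s-1}dt$ for $\mathrm{Re}\,s>0$. *)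

theory Defs
  imports "HOL-Complex_Analysis.Complex_Analysis"
begin

definition besselK :: "complex \<Rightarrow> real \<Rightarrow> complex" where
  "besselK s y = (1/2) * integral {0<..}
     (\<lambda>t::real. complex_of_real (exp (- y * (t + 1/t) / 2)) * (complex_of_real t) powr (s - 1))"

text \<open>F(x) = 1/(2 K_0(2)) int_x^oo exp(-t-1/t) dt/t  (used for x >= 0).
  K_0(2) is real; we take its real part.\<close>
definition Ffun :: "real \<Rightarrow> real" where
  "Ffun x = (1 / (2 * Re (besselK 0 2))) * integral {x..} (\<lambda>t. exp (- t - 1/t) / t)"

definition Fmellin :: "complex \<Rightarrow> complex" where
  "Fmellin s = integral {0<..} (\<lambda>t::real. complex_of_real (Ffun t) * (complex_of_real t) powr (s - 1))"

end

theory Submission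
  imports Defs "HOL-Real_Asymp.Real_Asymp"
begin

(* Substituting t = exp u gives 2 K_s(2) = int exp (s u - 2 cosh u) du over the real line, an
   entire and even function of s.  Substituting t = exp v in the Mellin integral of F and
   integrating by parts in v gives s * Fmellin s = K_s(2) / K_0(2), so K_s(2) / (s K_0(2)) is
   the continuation: odd, with a simple pole of residue 1 at 0.
   For t = |Im s| >= 2 a second integration by parts gives
   s K_s(2) = int sinh u * exp (s u - 2 cosh u) du, and moving the line of integration to
   Im u = pi/2 - 1/t gains the factor exp (- pi t / 2) at the cost of
   cos (pi/2 - 1/t) powr (- 1 - |Re s|) = O (t powr (1 + |Re s|)).  The factor sinh u is what
   keeps the shifted integral bounded uniformly down to Re s = 0. *)

section \<open>Integrals over the real line\<close>

lemma change_of_variables_real: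
  fixes f :: "real \<Rightarrow> 'a::euclidean_space" and g :: "real \<Rightarrow> real"
  assumes "S \<in> sets lebesgue"
    and "\<And>x. x \<in> S \<Longrightarrow> (g has_real_derivative g' x) (at x within S)"
    and "inj_on g S"
  shows "(\<lambda>x. \<bar>g' x\<bar> *\<^sub>R f (g x)) absolutely_integrable_on S \<longleftrightarrow> f absolutely_integrable_on g ` S"
    and "f absolutely_integrable_on g ` S \<Longrightarrow>
           integral (g ` S) f = integral S (\<lambda>x. \<bar>g' x\<bar> *\<^sub>R f (g x))"
  using absolutely_integrable_change_of_variables_real[OF assms, of f]
    has_absolute_integral_change_of_variables_real[OF assms, of f "integral (g ` S) f"]
  by auto

lemma image_exp_UNIV: "exp ` (UNIV :: real set) = {0<..}"
  by (auto simp: image_iff) (metis exp_ln)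

lemma image_exp_atLeast: "exp ` {v..} = {exp v..}" for v :: real
proof -
  have "x \<in> exp ` {v..}" if "exp v \<le> x" for x
  proof -
    have "0 < x" using that exp_gt_zero[of v] by linarith
    with that show ?thesis by (intro image_eqI[of _ _ "ln x"]) (auto simp: ln_ge_iff)
  qed
  then show ?thesis by auto
qed

lemma integral_exp_substitution:
  fixes f :: "real \<Rightarrow> 'a::euclidean_space"
  assumes "S \<in> sets lebesgue" and "(\<lambda>u. exp u *\<^sub>R f (exp u)) absolutely_integrable_on S"
  shows "integral (exp ` S) f = integral S (\<lambda>u. exp u *\<^sub>R f (exp u))"
proof -
  have "(exp has_real_derivative exp u) (at u within S)" for u
    by (rule DERIV_exp[THEN has_field_derivative_at_within])
  moreover have "inj_on exp S" by (simp add: inj_on_def)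
  ultimately show ?thesis
    using change_of_variables_real[OF assms(1), of exp exp f] assms(2) by simp
qed

lemma integral_affine_UNIV:
  fixes f :: "real \<Rightarrow> 'a::euclidean_space"
  assumes f: "f absolutely_integrable_on UNIV" and "m \<noteq> 0"
  shows "(\<lambda>x. f (m * x + c)) absolutely_integrable_on UNIV"
    and "integral UNIV (\<lambda>x. f (m * x + c)) = integral UNIV f /\<^sub>R \<bar>m\<bar>"
proof -
  have deriv: "((\<lambda>x. m * x + c) has_real_derivative m) (at x within UNIV)" for x
    by (auto intro!: derivative_eq_intros)
  have "inj_on (\<lambda>x. m * x + c) UNIV" "range (\<lambda>x. m * x + c) = UNIV"
    using \<open>m \<noteq> 0\<close> by (auto simp: inj_on_def intro!: surjI[of _ "\<lambda>y. (y - c) / m"])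
  moreover have "UNIV \<in> sets lebesgue" by simp
  ultimately have cov:
    "(\<lambda>x. \<bar>m\<bar> *\<^sub>R f (m * x + c)) absolutely_integrable_on UNIV"
    "integral UNIV f = \<bar>m\<bar> *\<^sub>R integral UNIV (\<lambda>x. f (m * x + c))"
    using change_of_variables_real[of UNIV "\<lambda>x. m * x + c" "\<lambda>_. m" f] deriv f by auto
  have unscale: "(\<lambda>x. f (m * x + c)) = (\<lambda>x. inverse \<bar>m\<bar> *\<^sub>R (\<bar>m\<bar> *\<^sub>R f (m * x + c)))"
    using \<open>m \<noteq> 0\<close> by simp
  show "(\<lambda>x. f (m * x + c)) absolutely_integrable_on UNIV"
    unfolding unscale by (rule absolutely_integrable_scaleR_left[OF cov(1)])
  show "integral UNIV (\<lambda>x. f (m * x + c)) = integral UNIV f /\<^sub>R \<bar>m\<bar>"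
    using \<open>m \<noteq> 0\<close> by (simp add: cov(2))
qed

lemma has_integral_exp_neg_abs: "((\<lambda>x::real. exp (- \<bar>x\<bar>)) has_integral 2) UNIV"
proof -
  have pos: "((\<lambda>x::real. exp (- \<bar>x\<bar>)) has_integral 1) {0..}"
    by (rule has_integral_eq[OF _ has_integral_exp_minus_to_infinity[of 1 0, simplified]]) auto
  then have "(\<lambda>x::real. exp (- \<bar>x\<bar>)) absolutely_integrable_on {0..}"
    by (intro nonnegative_absolutely_integrable_1) auto
  moreover have "(uminus has_real_derivative -1) (at x within {0..})" for x :: real
    by (auto intro!: derivative_eq_intros)
  moreover have "uminus ` {0::real..} = {..0}" "inj_on uminus {0::real..}" by auto
  ultimately have "(\<lambda>x::real. exp (- \<bar>x\<bar>)) absolutely_integrable_on {..0}"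
    "integral {..0} (\<lambda>x::real. exp (- \<bar>x\<bar>)) = integral {0..} (\<lambda>x::real. exp (- \<bar>x\<bar>))"
    using change_of_variables_real[of "{0..}" uminus "\<lambda>_. -1" "\<lambda>x. exp (- \<bar>x\<bar>)"] by auto
  with pos have neg: "((\<lambda>x::real. exp (- \<bar>x\<bar>)) has_integral 1) {..0}"
    by (metis absolutely_integrable_on_def has_integral_integrable_integral integral_unique)
  have "negligible ({..0} \<inter> {0::real..})"
    by (rule negligible_subset[of "{0}"]) auto
  moreover have "{..0} \<union> {0::real..} = UNIV" by auto
  ultimately show ?thesis
    using has_integral_Un[OF neg pos] by simp
qed

lemma has_integral_mult_exp_neg_abs: "((\<lambda>u::real. C * exp (- \<bar>u\<bar>)) has_integral 2 * C) UNIV"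
  using has_integral_mult_right[OF has_integral_exp_neg_abs, of C] by (simp add: mult.commute)

lemma has_integral_exp_neg_abs_affine:
  assumes "m \<noteq> 0"
  shows "((\<lambda>x::real. exp (- \<bar>m * x + c\<bar>)) has_integral 2 / \<bar>m\<bar>) UNIV"
proof -
  have "(\<lambda>x::real. exp (- \<bar>x\<bar>)) absolutely_integrable_on UNIV"
    using has_integral_exp_neg_abs by (intro nonnegative_absolutely_integrable_1) auto
  note affine = integral_affine_UNIV[OF this assms, of c]
  from affine(1) have "(\<lambda>x::real. exp (- \<bar>m * x + c\<bar>)) integrable_on UNIV"
    by (simp add: absolutely_integrable_on_def)
  moreover have "integral UNIV (\<lambda>x::real. exp (- \<bar>m * x + c\<bar>)) = 2 / \<bar>m\<bar>"
    using affine(2) integral_unique[OF has_integral_exp_neg_abs] by (simp add: divide_inverse_commute)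
  ultimately show ?thesis by (metis has_integral_integrable_integral)
qed

lemma absolutely_integrable_continuous_dominated:
  fixes f :: "'a::euclidean_space \<Rightarrow> 'b::euclidean_space"
  assumes "continuous_on UNIV f" "g integrable_on UNIV" "\<And>x. norm (f x) \<le> g x"
  shows "f absolutely_integrable_on UNIV"
  by (rule measurable_bounded_by_integrable_imp_absolutely_integrable[OF _ _ assms(2)])
     (use assms continuous_imp_measurable_on_sets_lebesgue[OF assms(1)] in auto)

lemma integral_symmetric_intervals_tendsto:
  fixes f :: "real \<Rightarrow> 'a::banach"
  assumes "f integrable_on UNIV"
  shows "(\<lambda>n. integral {-real n..real n} f) \<longlonglongrightarrow> integral UNIV f"
proof (rule LIMSEQ_I)
  fix e :: real assume "e > 0"
  from assms have "(f has_integral integral UNIV f) UNIV" by blast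
  with \<open>e > 0\<close> obtain B where
    B: "\<And>a b. ball 0 B \<subseteq> cbox a b \<Longrightarrow> norm (integral (cbox a b) f - integral UNIV f) < e"
    unfolding has_integral_alt' by force
  obtain N :: nat where "B \<le> real N" using real_arch_simple by blast
  have "norm (integral {-real n..real n} f - integral UNIV f) < e" if "N \<le> n" for n
  proof -
    have "ball 0 B \<subseteq> cbox (-real n) (real n)"
      using \<open>B \<le> real N\<close> that by (auto simp: dist_real_def)
    from B[OF this] show ?thesis by simp
  qed
  then show "\<exists>N. \<forall>n\<ge>N. norm (integral {-real n..real n} f - integral UNIV f) < e" by blast
qed

lemma integral_outside_interval:
  fixes h :: "real \<Rightarrow> 'a::banach"
  assumes "h integrable_on UNIV"
  shows "(\<lambda>x. if x \<in> {a..b} then 0 else h x) integrable_on UNIV"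
    and "integral UNIV h - integral {a..b} h = integral UNIV (\<lambda>x. if x \<in> {a..b} then 0 else h x)"
proof -
  have restrict: "(\<lambda>x. if x \<in> {a..b} then h x else 0) integrable_on UNIV"
    unfolding integrable_restrict_UNIV by (rule integrable_on_subinterval[OF assms]) auto
  have eq: "(\<lambda>x. if x \<in> {a..b} then 0 else h x) = (\<lambda>x. h x - (if x \<in> {a..b} then h x else 0))"
    by auto
  show "(\<lambda>x. if x \<in> {a..b} then 0 else h x) integrable_on UNIV"
    unfolding eq by (rule integrable_diff[OF assms restrict])
  show "integral UNIV h - integral {a..b} h = integral UNIV (\<lambda>x. if x \<in> {a..b} then 0 else h x)"
    unfolding eq integral_diff[OF assms restrict] integral_restrict_UNIV ..
qed

lemma norm_integral_tail_le:
  fixes f :: "real \<Rightarrow> 'a::euclidean_space"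
  assumes "f integrable_on UNIV" "g integrable_on UNIV" "\<And>x. norm (f x) \<le> g x"
  shows "norm (integral UNIV f - integral {a..b} f) \<le> integral UNIV g - integral {a..b} g"
  unfolding integral_outside_interval(2)[OF assms(1)] integral_outside_interval(2)[OF assms(2)]
  by (rule integral_norm_bound_integral)
     (use assms integral_outside_interval(1) in auto)

lemma integral_UNIV_derivative:
  fixes H h :: "real \<Rightarrow> 'a::banach"
  assumes "\<And>x. (H has_vector_derivative h x) (at x)" "h integrable_on UNIV"
    and "(H \<longlongrightarrow> A) at_top" "(H \<longlongrightarrow> B) at_bot"
  shows "integral UNIV h = A - B"
proof -
  have "integral {-real n..real n} h = H (real n) - H (- real n)" for n
    by (intro integral_unique fundamental_theorem_of_calculus)
       (auto intro: has_vector_derivative_at_within assms(1))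
  moreover have "(\<lambda>n. H (real n) - H (- real n)) \<longlonglongrightarrow> A - B"
  proof (intro tendsto_diff)
    show "(\<lambda>n. H (real n)) \<longlonglongrightarrow> A"
      by (rule filterlim_compose[OF assms(3) filterlim_real_sequentially])
    show "(\<lambda>n. H (- real n)) \<longlonglongrightarrow> B"
      by (rule filterlim_compose[OF assms(4)])
         (rule filterlim_compose[OF filterlim_uminus_at_bot_at_top filterlim_real_sequentially])
  qed
  ultimately show ?thesis
    using integral_symmetric_intervals_tendsto[OF assms(2)] LIMSEQ_unique by fastforce
qed

lemma uniform_limit_integral_symmetric_intervals:
  fixes f :: "'a \<Rightarrow> real \<Rightarrow> 'b::euclidean_space"
  assumes g: "g integrable_on UNIV"
    and f: "\<And>s. s \<in> K \<Longrightarrow> f s integrable_on UNIV"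
    and bound: "\<And>s u. s \<in> K \<Longrightarrow> norm (f s u) \<le> g u"
  shows "uniform_limit K (\<lambda>n s. integral {-real n..real n} (f s)) (\<lambda>s. integral UNIV (f s)) sequentially"
  unfolding uniform_limit_iff
proof (intro allI impI)
  fix e :: real assume "e > 0"
  with integral_symmetric_intervals_tendsto[OF g] obtain N where
    N: "\<And>n. N \<le> n \<Longrightarrow> integral UNIV g - integral {-real n..real n} g < e"
    unfolding lim_sequentially dist_real_def by (metis abs_minus_commute abs_less_iff)
  have "dist (integral {-real n..real n} (f s)) (integral UNIV (f s)) < e"
    if "N \<le> n" "s \<in> K" for n s
  proof -
    have "norm (integral UNIV (f s) - integral {-real n..real n} (f s))
            \<le> integral UNIV g - integral {-real n..real n} g"
      using norm_integral_tail_le f[OF that(2)] g bound[OF that(2)] by blast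
    with N[OF that(1)] show ?thesis by (simp add: dist_norm norm_minus_commute)
  qed
  then show "\<forall>\<^sub>F n in sequentially. \<forall>s\<in>K.
               dist (integral {-real n..real n} (f s)) (integral UNIV (f s)) < e"
    unfolding eventually_sequentially by blast
qed

lemma holomorphic_on_integral_UNIV:
  fixes f f' :: "complex \<Rightarrow> real \<Rightarrow> complex"
  assumes deriv: "\<And>s u. ((\<lambda>s. f s u) has_field_derivative f' s u) (at s)"
    and cont_deriv: "continuous_on UNIV (\<lambda>(s, u). f' s u)"
    and cont: "\<And>s. continuous_on UNIV (f s)"
    and dominated: "\<And>z. \<exists>d>0. \<exists>g. g integrable_on UNIV \<and> (\<forall>s\<in>cball z d. \<forall>u. norm (f s u) \<le> g u)"
  shows "(\<lambda>s. integral UNIV (f s)) holomorphic_on UNIV"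
proof (rule holomorphic_uniform_sequence[OF open_UNIV])
  fix n :: nat
  have "(\<lambda>s. integral (cbox (-real n) (real n)) (f s)) holomorphic_on UNIV"
    by (rule leibniz_rule_holomorphic[where fx = f'])
       (auto intro: has_field_derivative_at_within deriv continuous_on_subset[OF cont_deriv]
             integrable_continuous_interval continuous_on_subset[OF cont])
  then show "(\<lambda>s. integral {-real n..real n} (f s)) holomorphic_on UNIV"
    by simp
next
  fix z :: complex
  obtain d g where "d > 0" and g: "g integrable_on UNIV"
    and bound: "\<And>s u. s \<in> cball z d \<Longrightarrow> norm (f s u) \<le> g u"
    using dominated by blast
  have "f s integrable_on UNIV" if "s \<in> cball z d" for s
    using absolutely_integrable_continuous_dominated[OF cont g bound[OF that]]
    by (simp add: absolutely_integrable_on_def)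
  then have "uniform_limit (cball z d) (\<lambda>n s. integral {-real n..real n} (f s))
              (\<lambda>s. integral UNIV (f s)) sequentially"
    by (rule uniform_limit_integral_symmetric_intervals[OF g _ bound])
  with \<open>d > 0\<close> show "\<exists>d>0. cball z d \<subseteq> UNIV \<and>
      uniform_limit (cball z d) (\<lambda>n s. integral {-real n..real n} (f s)) (\<lambda>s. integral UNIV (f s)) sequentially"
    by blast
qed

lemma integral_shift_horizontal_line:
  fixes \<Phi> :: "complex \<Rightarrow> complex" and M :: "real \<Rightarrow> real"
  assumes holo: "\<Phi> holomorphic_on UNIV" and "0 \<le> \<theta>"
    and int0: "(\<lambda>u. \<Phi> (of_real u)) integrable_on UNIV"
    and int1: "(\<lambda>u. \<Phi> (of_real u + \<i> * of_real \<theta>)) integrable_on UNIV"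
    and bound: "\<And>z. 0 \<le> Im z \<Longrightarrow> Im z \<le> \<theta> \<Longrightarrow> norm (\<Phi> z) \<le> M (Re z)"
    and "(M \<longlongrightarrow> 0) at_top" "(M \<longlongrightarrow> 0) at_bot"
  shows "integral UNIV (\<lambda>u. \<Phi> (of_real u + \<i> * of_real \<theta>)) = integral UNIV (\<lambda>u. \<Phi> (of_real u))"
proof -
  obtain P where P: "\<And>z. (P has_field_derivative \<Phi> z) (at z)"
    using holomorphic_convex_primitive'[OF convex_UNIV open_UNIV holo] by auto
  define V where "V x = P (of_real x + \<i> * of_real \<theta>) - P (of_real x)" for x
  have "((\<lambda>z. P (z + \<i> * of_real \<theta>) - P z) has_field_derivative
          \<Phi> (of_real x + \<i> * of_real \<theta>) - \<Phi> (of_real x)) (at (of_real x))" for x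
    by (auto intro!: derivative_eq_intros DERIV_chain2[OF P] P)
  then have deriv: "(V has_vector_derivative \<Phi> (of_real x + \<i> * of_real \<theta>) - \<Phi> (of_real x)) (at x)" for x
    unfolding V_def by (rule has_vector_derivative_real_field)
  have side: "norm (V x) \<le> \<theta> * M x" for x
  proof -
    let ?S = "closed_segment (of_real x) (of_real x + \<i> * of_real \<theta>)"
    have S: "Re z = x \<and> 0 \<le> Im z \<and> Im z \<le> \<theta>" if "z \<in> ?S" for z
      using that \<open>0 \<le> \<theta>\<close> by (simp add: closed_segment_same_Re closed_segment_eq_real_ivl)
    have "norm (P (of_real x + \<i> * of_real \<theta>) - P (of_real x))
            \<le> M x * norm ((of_real x + \<i> * of_real \<theta>) - of_real x)"
      by (rule field_differentiable_bound[OF convex_closed_segment])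
         (use S bound in \<open>auto intro: has_field_derivative_at_within P\<close>)
    with \<open>0 \<le> \<theta>\<close> show ?thesis by (simp add: V_def norm_mult mult.commute)
  qed
  have V_lim: "(V \<longlongrightarrow> 0) F" if "(M \<longlongrightarrow> 0) F" for F
    by (rule Lim_null_comparison[OF always_eventually[OF allI[OF side]]])
       (use tendsto_mult_right_zero[OF that] in simp)
  have "integral UNIV (\<lambda>u. \<Phi> (of_real u + \<i> * of_real \<theta>) - \<Phi> (of_real u)) = 0 - 0"
    by (intro integral_UNIV_derivative[OF deriv] integrable_diff int0 int1 V_lim assms(6,7))
  then show ?thesis
    using integral_diff[OF int1 int0] by simp
qed

lemma exp_neg_le_power_div:
  assumes "0 < w" "0 < N"
  shows "exp (- w) \<le> real N ^ N / w ^ N"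
proof -
  have "w / N \<le> exp (w / N)"
    using exp_ge_add_one_self[of "w / N"] by linarith
  then have "(w / N) ^ N \<le> exp (w / N) ^ N"
    using assms by (intro power_mono) auto
  also have "\<dots> = exp w"
    using assms by (simp flip: exp_of_nat_mult)
  finally show ?thesis
    using assms by (simp add: power_divide exp_minus field_simps)
qed

definition powr_exp_const :: "real \<Rightarrow> real" where
  "powr_exp_const A = real (nat \<lceil>A\<rceil> + 2) ^ (nat \<lceil>A\<rceil> + 2)"

lemma powr_exp_const_ge_1: "1 \<le> powr_exp_const A"
  unfolding powr_exp_const_def by (intro one_le_power) auto

lemma powr_mult_exp_neg_le:
  assumes "0 \<le> a" "a \<le> A" "0 < w"
  shows "w powr (1 + a) * exp (- w) \<le> powr_exp_const A * exp (- \<bar>ln w\<bar>)"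
proof (cases "w \<le> 1")
  case True
  have "w powr (1 + a) * exp (- w) \<le> w powr 1 * 1"
    using assms True by (intro mult_mono powr_mono') auto
  also have "\<dots> = exp (- \<bar>ln w\<bar>)"
    using assms True by (simp add: abs_if)
  also have "\<dots> \<le> powr_exp_const A * exp (- \<bar>ln w\<bar>)"
    using powr_exp_const_ge_1[of A] by simp
  finally show ?thesis .
next
  case False
  define N where "N = nat \<lceil>A\<rceil> + 2"
  have N: "0 < N" "A + 2 \<le> real N"
    unfolding N_def by linarith+
  have "w powr (1 + a) * exp (- w) \<le> w ^ (N - 1) * (real N ^ N / w ^ N)"
  proof (intro mult_mono)
    have "w powr (1 + a) \<le> w powr real (N - 1)"
      using assms False N by (intro powr_mono) auto
    then show "w powr (1 + a) \<le> w ^ (N - 1)"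
      using assms by (simp add: powr_realpow)
  qed (use assms N exp_neg_le_power_div in auto)
  also have "\<dots> = real N ^ N / w"
  proof -
    have "w ^ N = w ^ (N - 1) * w"
      using N by (metis Suc_pred' power_Suc2)
    with assms show ?thesis by (simp add: field_simps)
  qed
  also have "\<dots> = powr_exp_const A * exp (- \<bar>ln w\<bar>)"
    using False assms by (simp add: powr_exp_const_def N_def exp_minus divide_inverse)
  finally show ?thesis .
qed

definition cosh_exp_majorant :: "real \<Rightarrow> real \<Rightarrow> real \<Rightarrow> real \<Rightarrow> real" where
  "cosh_exp_majorant A a c u =
     powr_exp_const A * c powr - (1 + a) * (exp (- \<bar>u + ln c\<bar>) + exp (- \<bar>u - ln c\<bar>))"

lemma cosh_mult_exp_cosh_le:
  assumes "0 \<le> a" "a \<le> A" "0 < c"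
  shows "cosh u * exp (a * \<bar>u\<bar> - 2 * c * cosh u) \<le> cosh_exp_majorant A a c u"
proof -
  define w where "w = c * exp \<bar>u\<bar>"
  have "0 < w" using assms by (simp add: w_def)
  have "cosh u * exp (a * \<bar>u\<bar> - 2 * c * cosh u) \<le> exp \<bar>u\<bar> * exp (a * \<bar>u\<bar> - w)"
  proof (intro mult_mono)
    show "cosh u \<le> exp \<bar>u\<bar>" by (simp add: cosh_def abs_if)
    have "exp \<bar>u\<bar> \<le> 2 * cosh u" by (simp add: cosh_def abs_if)
    with assms show "exp (a * \<bar>u\<bar> - 2 * c * cosh u) \<le> exp (a * \<bar>u\<bar> - w)"
      by (simp add: w_def)
  qed auto
  also have "\<dots> = c powr - (1 + a) * (w powr (1 + a) * exp (- w))"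
  proof -
    have "w powr (1 + a) = c powr (1 + a) * exp ((1 + a) * \<bar>u\<bar>)"
      using assms by (simp add: w_def powr_def ln_mult distrib_left exp_add)
    moreover have "c powr - (1 + a) * c powr (1 + a) = 1"
      using assms by (simp flip: powr_add)
    moreover have "exp \<bar>u\<bar> * exp (a * \<bar>u\<bar> - w) = exp ((1 + a) * \<bar>u\<bar>) * exp (- w)"
      by (simp add: algebra_simps flip: exp_add)
    ultimately show ?thesis
      by (metis (no_types, lifting) mult.assoc mult_1)
  qed
  also have "\<dots> \<le> c powr - (1 + a) * (powr_exp_const A * exp (- \<bar>ln w\<bar>))"
    using assms \<open>0 < w\<close> by (intro mult_left_mono powr_mult_exp_neg_le) auto
  also have "exp (- \<bar>ln w\<bar>) \<le> exp (- \<bar>u + ln c\<bar>) + exp (- \<bar>u - ln c\<bar>)"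
    using assms by (cases "0 \<le> u") (auto simp: w_def ln_mult add_increasing add_increasing2)
  finally show ?thesis
    using powr_exp_const_ge_1[of A]
    by (simp add: cosh_exp_majorant_def mult_left_mono mult.assoc mult.left_commute)
qed

lemma cosh_exp_majorant_nonneg: "0 \<le> cosh_exp_majorant A a c u"
  using powr_exp_const_ge_1[of A] by (simp add: cosh_exp_majorant_def)

lemma has_integral_cosh_exp_majorant:
  assumes "0 < c"
  shows "(cosh_exp_majorant A a c has_integral 4 * powr_exp_const A * c powr - (1 + a)) UNIV"
proof -
  have "((\<lambda>u. exp (- \<bar>1 * u + ln c\<bar>) + exp (- \<bar>1 * u + - ln c\<bar>)) has_integral 2 / \<bar>1\<bar> + 2 / \<bar>1\<bar>) UNIV"
    by (intro has_integral_add has_integral_exp_neg_abs_affine) simp_all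
  from has_integral_mult_right[OF this, of "powr_exp_const A * c powr - (1 + a)"] show ?thesis
    by (simp add: cosh_exp_majorant_def[abs_def] mult_ac)
qed

lemma cosh_exp_majorant_tendsto:
  "(cosh_exp_majorant A a c \<longlongrightarrow> 0) at_top" "(cosh_exp_majorant A a c \<longlongrightarrow> 0) at_bot"
  unfolding cosh_exp_majorant_def[abs_def] by real_asymp+

lemma cosh_mult_exp_cosh_le_exp_neg_abs:
  assumes "0 \<le> a"
  shows "cosh u * exp (a * \<bar>u\<bar> - 2 * cosh u) \<le> 2 * powr_exp_const a * exp (- \<bar>u\<bar>)"
  using cosh_mult_exp_cosh_le[OF assms order_refl zero_less_one, of u]
  by (simp add: cosh_exp_majorant_def)

lemma exp_cosh_le_exp_neg_abs:
  assumes "0 \<le> a"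
  shows "exp (a * \<bar>u\<bar> - 2 * cosh u) \<le> 2 * powr_exp_const a * exp (- \<bar>u\<bar>)"
  using cosh_mult_exp_cosh_le_exp_neg_abs[OF assms, of u] cosh_real_ge_1[of u]
  by (smt (verit) exp_gt_zero mult_le_cancel_right1)

lemma sin_ge_half:
  fixes x :: real
  assumes "0 \<le> x" "x \<le> 1"
  shows "x / 2 \<le> sin x"
proof -
  have "\<bar>sin x - (\<Sum>m<3. sin_coeff m * x ^ m)\<bar> \<le> inverse (fact 3) * \<bar>x\<bar> ^ 3"
    by (rule Maclaurin_sin_bound)
  moreover have "(\<Sum>m<3. sin_coeff m * x ^ m) = x"
    by (simp add: sin_coeff_def numeral_3_eq_3 lessThan_Suc)
  moreover have "x ^ 3 \<le> x ^ 1"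
    using assms by (intro power_decreasing) auto
  ultimately have "\<bar>sin x - x\<bar> \<le> x / 6"
    using assms by (simp add: fact_numeral)
  then show ?thesis
    using assms by linarith
qed

lemma norm_sinh_le_cosh_Re: "norm (sinh z) \<le> cosh (Re z)"
proof -
  have "norm (sinh z) = norm (exp z - exp (- z)) / 2"
    by (simp add: sinh_def norm_divide)
  also have "\<dots> \<le> (norm (exp z) + norm (exp (- z))) / 2"
    by (intro divide_right_mono norm_triangle_ineq4) auto
  also have "\<dots> = cosh (Re z)" by (simp add: cosh_def)
  finally show ?thesis .
qed

lemma powr_ge_exp_neg_one:
  fixes a r :: real
  assumes "0 \<le> a" "a \<le> r" "0 < r"
  shows "exp (- 1) \<le> r powr a"
proof (cases "1 \<le> r \<or> a = 0")
  case True
  then have "1 \<le> r powr a"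
    using assms by (auto simp: ge_one_powr_ge_zero)
  then show ?thesis by (smt (verit) exp_le_one_iff)
next
  case False
  then have "0 < a" using assms by simp
  have "- ln a \<le> 1 / a - 1"
    using ln_le_minus_one[of "1 / a"] \<open>0 < a\<close> by (simp add: ln_div)
  then have "a * (- ln a) \<le> a * (1 / a - 1)"
    using \<open>0 < a\<close> by (intro mult_left_mono) auto
  then have "- 1 \<le> a * ln a"
    using \<open>0 < a\<close> by (simp add: algebra_simps)
  then have "exp (- 1) \<le> a powr a"
    using \<open>0 < a\<close> by (simp add: powr_def mult.commute)
  also have "\<dots> \<le> r powr a"
    using assms \<open>0 < a\<close> by (intro powr_mono2) auto
  finally show ?thesis .
qed

section \<open>An integral representation of \<open>K\<^sub>s(2)\<close>\<close>

definition bessel_kernel :: "complex \<Rightarrow> complex \<Rightarrow> complex" where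
  "bessel_kernel s z = exp (s * z - 2 * cosh z)"

definition bessel_integral :: "complex \<Rightarrow> complex" where
  "bessel_integral s = integral UNIV (\<lambda>u::real. bessel_kernel s (of_real u))"

lemma cosh_of_real: "cosh (complex_of_real x) = complex_of_real (cosh x)"
  by (simp add: cosh_def scaleR_conv_of_real flip: exp_of_real)

lemma norm_bessel_kernel:
  "norm (bessel_kernel s z) = exp (Re s * Re z - Im s * Im z - 2 * cosh (Re z) * cos (Im z))"
proof -
  have "Re (cosh z) = cosh (Re z) * cos (Im z)"
    by (simp add: cosh_def Re_exp field_simps)
  then show ?thesis by (simp add: bessel_kernel_def)
qed

lemma norm_bessel_kernel_of_real_le_exp:
  assumes "\<bar>Re s\<bar> \<le> a"
  shows "norm (bessel_kernel s (of_real u)) \<le> exp (a * \<bar>u\<bar> - 2 * cosh u)"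
proof -
  have "Re s * u \<le> \<bar>Re s\<bar> * \<bar>u\<bar>" by (metis abs_ge_self abs_mult)
  also have "\<dots> \<le> a * \<bar>u\<bar>" using assms by (intro mult_right_mono) auto
  finally show ?thesis by (simp add: norm_bessel_kernel)
qed

lemma norm_bessel_kernel_of_real_le:
  assumes "\<bar>Re s\<bar> \<le> a"
  shows "norm (bessel_kernel s (of_real u)) \<le> 2 * powr_exp_const a * exp (- \<bar>u\<bar>)"
  using norm_bessel_kernel_of_real_le_exp[OF assms] exp_cosh_le_exp_neg_abs[of a u] assms
  by (meson abs_ge_zero order.trans)

lemma bessel_kernel_continuous: "continuous_on UNIV (\<lambda>u::real. bessel_kernel s (of_real u))"
  unfolding bessel_kernel_def by (intro continuous_intros)

lemma bessel_kernel_absolutely_integrable: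
  "(\<lambda>u::real. bessel_kernel s (of_real u)) absolutely_integrable_on UNIV"
  using has_integral_mult_exp_neg_abs
  by (intro absolutely_integrable_continuous_dominated[OF bessel_kernel_continuous _
        norm_bessel_kernel_of_real_le[OF order_refl]]) blast

lemma besselK_eq_bessel_integral: "besselK s 2 = bessel_integral s / 2"
proof -
  define f where
    "f = (\<lambda>t::real. complex_of_real (exp (- 2 * (t + 1 / t) / 2)) * complex_of_real t powr (s - 1))"
  have eq: "exp u *\<^sub>R f (exp u) = bessel_kernel s (of_real u)" for u :: real
  proof -
    have "complex_of_real (exp u) powr (s - 1) = exp ((s - 1) * of_real u)"
      by (simp add: powr_def Ln_of_real)
    moreover have "- 2 * (exp u + 1 / exp u) / 2 = - 2 * cosh u"
      by (simp add: cosh_def exp_minus field_simps)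
    ultimately have "exp u *\<^sub>R f (exp u)
        = of_real (exp u) * (of_real (exp (- 2 * cosh u)) * exp ((s - 1) * of_real u))"
      by (simp only: f_def scaleR_conv_of_real)
    also have "\<dots> = bessel_kernel s (of_real u)"
      by (simp add: bessel_kernel_def cosh_of_real algebra_simps flip: exp_of_real exp_add)
    finally show ?thesis .
  qed
  have "besselK s 2 = integral (exp ` UNIV) f / 2"
    by (simp add: besselK_def f_def image_exp_UNIV)
  also have "integral (exp ` UNIV) f = bessel_integral s"
    using integral_exp_substitution[of UNIV f] bessel_kernel_absolutely_integrable[of s]
    by (simp add: eq bessel_integral_def)
  finally show ?thesis .
qed

lemma bessel_integral_holomorphic: "bessel_integral holomorphic_on UNIV"
  unfolding bessel_integral_def[abs_def]
proof (rule holomorphic_on_integral_UNIV[where f = "\<lambda>s u. bessel_kernel s (of_real u)"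
                                          and f' = "\<lambda>s u. of_real u * bessel_kernel s (of_real u)"])
  show "((\<lambda>s. bessel_kernel s (of_real u)) has_field_derivative
          of_real u * bessel_kernel s (of_real u)) (at s)" for s u
    unfolding bessel_kernel_def by (auto intro!: derivative_eq_intros simp: mult.commute)
  show "continuous_on UNIV (\<lambda>(s, u). of_real u * bessel_kernel s (of_real u))"
    unfolding bessel_kernel_def case_prod_unfold by (intro continuous_intros)
  show "continuous_on UNIV (\<lambda>u. bessel_kernel s (of_real u))" for s
    by (rule bessel_kernel_continuous)
  fix z :: complex
  have "norm (bessel_kernel s (of_real u)) \<le> 2 * powr_exp_const (\<bar>Re z\<bar> + 1) * exp (- \<bar>u\<bar>)"
    if "s \<in> cball z 1" for s u
  proof (rule norm_bessel_kernel_of_real_le)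
    have "\<bar>Re s - Re z\<bar> \<le> 1"
      using that abs_Re_le_cmod[of "s - z"] by (simp add: dist_norm norm_minus_commute)
    then show "\<bar>Re s\<bar> \<le> \<bar>Re z\<bar> + 1" by linarith
  qed
  moreover have "(\<lambda>u. 2 * powr_exp_const (\<bar>Re z\<bar> + 1) * exp (- \<bar>u\<bar>)) integrable_on UNIV"
    using has_integral_mult_exp_neg_abs by blast
  ultimately show "\<exists>d>0. \<exists>g. g integrable_on UNIV \<and>
               (\<forall>s\<in>cball z d. \<forall>u. norm (bessel_kernel s (of_real u)) \<le> g u)"
    by (intro exI[of _ 1] exI[of _ "\<lambda>u. 2 * powr_exp_const (\<bar>Re z\<bar> + 1) * exp (- \<bar>u\<bar>)"]) auto
qed

lemma bessel_integral_minus: "bessel_integral (- s) = bessel_integral s"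
proof -
  have "bessel_kernel (- s) (of_real u) = bessel_kernel s (of_real (- 1 * u + 0))" for u
    by (simp add: bessel_kernel_def)
  then show ?thesis
    using integral_affine_UNIV(2)[OF bessel_kernel_absolutely_integrable[of s], where m = "- 1" and c = 0]
    by (simp add: bessel_integral_def)
qed

lemma bessel_integral_cnj: "bessel_integral (cnj s) = cnj (bessel_integral s)"
proof -
  have "cnj (bessel_kernel s (of_real u)) = bessel_kernel (cnj s) (of_real u)" for u
    by (simp add: bessel_kernel_def cosh_of_real exp_cnj)
  then show ?thesis by (simp add: bessel_integral_def integral_cnj)
qed

definition exp_cosh_integral :: real where
  "exp_cosh_integral = integral UNIV (\<lambda>u. exp (- 2 * cosh u))"

lemma bessel_kernel_0: "bessel_kernel 0 (of_real u) = of_real (exp (- 2 * cosh u))"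
  by (simp add: bessel_kernel_def cosh_of_real flip: exp_of_real)

lemma exp_cosh_absolutely_integrable: "(\<lambda>u::real. exp (- 2 * cosh u)) absolutely_integrable_on UNIV"
  using norm_bessel_kernel_of_real_le[of 0 0] has_integral_mult_exp_neg_abs
  by (intro absolutely_integrable_continuous_dominated[where g = "\<lambda>u. 2 * powr_exp_const 0 * exp (- \<bar>u\<bar>)"])
     (auto intro!: continuous_intros simp: bessel_kernel_0)

lemma bessel_integral_0: "bessel_integral 0 = of_real exp_cosh_integral"
proof -
  have "((\<lambda>u. complex_of_real (exp (- 2 * cosh u))) has_integral of_real exp_cosh_integral) UNIV"
    using exp_cosh_absolutely_integrable unfolding exp_cosh_integral_def
    by (intro has_integral_of_real integrable_integral) (simp add: absolutely_integrable_on_def)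
  then show ?thesis
    by (simp add: bessel_integral_def bessel_kernel_0 integral_unique)
qed

lemma exp_cosh_integral_pos: "0 < exp_cosh_integral"
proof -
  have int: "(\<lambda>u::real. exp (- 2 * cosh u)) integrable_on UNIV"
    using exp_cosh_absolutely_integrable by (simp add: absolutely_integrable_on_def)
  have "0 < integral {0..1} (\<lambda>u::real. exp (- 2 * exp (1::real)))" by simp
  also have "\<dots> \<le> integral {0..1} (\<lambda>u::real. exp (- 2 * cosh u))"
  proof (rule integral_le)
    show "(\<lambda>u::real. exp (- 2 * cosh u)) integrable_on {0..1}"
      by (rule integrable_on_subinterval[OF int]) auto
    fix u :: real assume "u \<in> {0..1}"
    have "cosh u \<le> exp \<bar>u\<bar>" by (simp add: cosh_def abs_if)
    also have "\<dots> \<le> exp 1" using \<open>u \<in> {0..1}\<close> by simp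
    finally have "cosh u \<le> exp 1" .
    then show "exp (- 2 * exp (1::real)) \<le> exp (- 2 * cosh u)" by simp
  qed (rule integrable_const_ivl)
  also have "\<dots> \<le> exp_cosh_integral"
    unfolding exp_cosh_integral_def
    by (rule integral_subset_le) (use integrable_on_subinterval[OF int, of 0 1] int in auto)
  finally show ?thesis .
qed

lemma sinh_bessel_kernel_absolutely_integrable:
  "(\<lambda>u::real. sinh (of_real u) * bessel_kernel s (of_real u)) absolutely_integrable_on UNIV"
proof (rule absolutely_integrable_continuous_dominated)
  show "continuous_on UNIV (\<lambda>u::real. sinh (of_real u) * bessel_kernel s (of_real u))"
    unfolding bessel_kernel_def by (intro continuous_intros)
  show "(\<lambda>u. 2 * powr_exp_const \<bar>Re s\<bar> * exp (- \<bar>u\<bar>)) integrable_on UNIV"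
    using has_integral_mult_exp_neg_abs by blast
  fix u :: real
  have "norm (sinh (of_real u) * bessel_kernel s (of_real u))
          \<le> cosh u * exp (\<bar>Re s\<bar> * \<bar>u\<bar> - 2 * cosh u)"
    unfolding norm_mult
    by (intro mult_mono norm_bessel_kernel_of_real_le_exp)
       (use norm_sinh_le_cosh_Re[of "of_real u"] in auto)
  also have "\<dots> \<le> 2 * powr_exp_const \<bar>Re s\<bar> * exp (- \<bar>u\<bar>)"
    by (rule cosh_mult_exp_cosh_le_exp_neg_abs) simp
  finally show "norm (sinh (of_real u) * bessel_kernel s (of_real u))
                  \<le> 2 * powr_exp_const \<bar>Re s\<bar> * exp (- \<bar>u\<bar>)" .
qed

lemma bessel_integral_by_parts:
  "s * bessel_integral s = 2 * integral UNIV (\<lambda>u::real. sinh (of_real u) * bessel_kernel s (of_real u))"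
proof -
  define k where "k = (\<lambda>u::real. bessel_kernel s (of_real u))"
  define h where "h u = s * k u - 2 * (sinh (of_real u) * k u)" for u :: real
  have k_int: "k integrable_on UNIV"
    and sk_int: "(\<lambda>u. sinh (of_real u) * k u) integrable_on UNIV"
    using bessel_kernel_absolutely_integrable sinh_bessel_kernel_absolutely_integrable
    by (auto simp: k_def absolutely_integrable_on_def)
  have "(k has_vector_derivative h u) (at u)" for u
  proof -
    have "(bessel_kernel s has_field_derivative h u) (at (of_real u))"
      unfolding h_def k_def bessel_kernel_def by (auto intro!: derivative_eq_intros simp: algebra_simps)
    then show ?thesis unfolding k_def by (rule has_vector_derivative_real_field)
  qed
  moreover have "h integrable_on UNIV"
    unfolding h_def by (intro integrable_diff integrable_on_mult_right k_int sk_int)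
  moreover have "(k \<longlongrightarrow> 0) F" if "((\<lambda>u. 2 * powr_exp_const \<bar>Re s\<bar> * exp (- \<bar>u\<bar>)) \<longlongrightarrow> 0) F" for F
    by (rule Lim_null_comparison[OF always_eventually that])
       (simp add: k_def norm_bessel_kernel_of_real_le)
  moreover have "((\<lambda>u::real. 2 * powr_exp_const \<bar>Re s\<bar> * exp (- \<bar>u\<bar>)) \<longlongrightarrow> 0) at_top"
    "((\<lambda>u::real. 2 * powr_exp_const \<bar>Re s\<bar> * exp (- \<bar>u\<bar>)) \<longlongrightarrow> 0) at_bot"
    by real_asymp+
  ultimately have "integral UNIV h = 0 - 0"
    by (intro integral_UNIV_derivative) auto
  then show ?thesis
    unfolding h_def using k_int sk_int
    by (simp add: integral_diff integrable_on_mult_right bessel_integral_def k_def)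
qed

section \<open>Decay on vertical lines\<close>

lemma norm_sinh_mult_bessel_kernel_le:
  assumes "0 \<le> Im z" "Im z \<le> \<theta>" "\<theta> < pi / 2" "0 \<le> Im s" "\<bar>Re s\<bar> \<le> A"
  shows "norm (sinh z * bessel_kernel s z)
           \<le> exp (- Im s * Im z) * cosh_exp_majorant A \<bar>Re s\<bar> (cos \<theta>) (Re z)"
proof -
  have "cos \<theta> \<le> cos (Im z)"
    by (rule cos_monotone_0_pi_le) (use assms in auto)
  then have "2 * cos \<theta> * cosh (Re z) \<le> 2 * cosh (Re z) * cos (Im z)"
    by (simp add: mult.commute mult_left_mono)
  moreover have "Re s * Re z \<le> \<bar>Re s\<bar> * \<bar>Re z\<bar>"
    by (metis abs_ge_self abs_mult)
  ultimately have "Re s * Re z - Im s * Im z - 2 * cosh (Re z) * cos (Im z)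
                     \<le> \<bar>Re s\<bar> * \<bar>Re z\<bar> - Im s * Im z - 2 * cos \<theta> * cosh (Re z)"
    by linarith
  then have "norm (sinh z * bessel_kernel s z)
               \<le> cosh (Re z) * exp (\<bar>Re s\<bar> * \<bar>Re z\<bar> - Im s * Im z - 2 * cos \<theta> * cosh (Re z))"
    unfolding norm_mult norm_bessel_kernel
    by (intro mult_mono norm_sinh_le_cosh_Re) auto
  also have "\<dots> = exp (- Im s * Im z) * (cosh (Re z) * exp (\<bar>Re s\<bar> * \<bar>Re z\<bar> - 2 * cos \<theta> * cosh (Re z)))"
    by (simp add: algebra_simps flip: exp_add)
  also have "\<dots> \<le> exp (- Im s * Im z) * cosh_exp_majorant A \<bar>Re s\<bar> (cos \<theta>) (Re z)"
    using assms by (intro mult_left_mono cosh_mult_exp_cosh_le cos_gt_zero_pi) auto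
  finally show ?thesis .
qed

lemma norm_sinh_mult_bessel_kernel_le_majorant:
  assumes "0 \<le> Im z" "Im z \<le> \<theta>" "\<theta> < pi / 2" "0 \<le> Im s"
  shows "norm (sinh z * bessel_kernel s z) \<le> cosh_exp_majorant \<bar>Re s\<bar> \<bar>Re s\<bar> (cos \<theta>) (Re z)"
proof -
  have "norm (sinh z * bessel_kernel s z)
          \<le> exp (- Im s * Im z) * cosh_exp_majorant \<bar>Re s\<bar> \<bar>Re s\<bar> (cos \<theta>) (Re z)"
    using assms by (intro norm_sinh_mult_bessel_kernel_le) auto
  also have "\<dots> \<le> 1 * cosh_exp_majorant \<bar>Re s\<bar> \<bar>Re s\<bar> (cos \<theta>) (Re z)"
    using assms by (intro mult_right_mono cosh_exp_majorant_nonneg) auto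
  finally show ?thesis by simp
qed

lemma sinh_bessel_kernel_horizontal_integrable:
  assumes "0 \<le> Im s" "0 \<le> v" "v < pi / 2"
  shows "(\<lambda>u. sinh (of_real u + \<i> * of_real v) * bessel_kernel s (of_real u + \<i> * of_real v))
           integrable_on UNIV"
proof -
  have cont: "continuous_on UNIV
          (\<lambda>u. sinh (of_real u + \<i> * of_real v) * bessel_kernel s (of_real u + \<i> * of_real v))"
    unfolding bessel_kernel_def by (intro continuous_intros)
  have bound: "norm (sinh (of_real u + \<i> * of_real v) * bessel_kernel s (of_real u + \<i> * of_real v))
                 \<le> cosh_exp_majorant \<bar>Re s\<bar> \<bar>Re s\<bar> (cos v) u" for u
    using norm_sinh_mult_bessel_kernel_le_majorant[of "of_real u + \<i> * of_real v" v s] assms by simp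
  have "0 < cos v"
    using assms by (intro cos_gt_zero_pi) auto
  then have "cosh_exp_majorant \<bar>Re s\<bar> \<bar>Re s\<bar> (cos v) integrable_on UNIV"
    by (rule has_integral_integrable[OF has_integral_cosh_exp_majorant])
  from absolutely_integrable_continuous_dominated[OF cont this bound] show ?thesis
    by (simp add: absolutely_integrable_on_def)
qed

(* Shifting the line of integration up to Im u = theta gains the factor exp (- Im s * theta);
   on the shifted line the kernel is damped by Re (cosh (u + i theta)) = cos theta * cosh u. *)

lemma integral_sinh_bessel_kernel_shift:
  assumes "0 \<le> Im s" "0 \<le> \<theta>" "\<theta> < pi / 2"
  shows "integral UNIV (\<lambda>u. sinh (of_real u + \<i> * of_real \<theta>) * bessel_kernel s (of_real u + \<i> * of_real \<theta>))
           = integral UNIV (\<lambda>u::real. sinh (of_real u) * bessel_kernel s (of_real u))"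
proof (rule integral_shift_horizontal_line[where \<Phi> = "\<lambda>z. sinh z * bessel_kernel s z"
                                            and M = "cosh_exp_majorant \<bar>Re s\<bar> \<bar>Re s\<bar> (cos \<theta>)"])
  show "(\<lambda>z. sinh z * bessel_kernel s z) holomorphic_on UNIV"
    unfolding bessel_kernel_def sinh_def cosh_def scaleR_conv_of_real by (intro holomorphic_intros)
  show "(\<lambda>u. sinh (of_real u) * bessel_kernel s (of_real u)) integrable_on UNIV"
    using sinh_bessel_kernel_horizontal_integrable[of s 0] assms by simp
  show "(\<lambda>u. sinh (of_real u + \<i> * of_real \<theta>) * bessel_kernel s (of_real u + \<i> * of_real \<theta>))
          integrable_on UNIV"
    by (rule sinh_bessel_kernel_horizontal_integrable[OF assms])
  show "norm (sinh z * bessel_kernel s z) \<le> cosh_exp_majorant \<bar>Re s\<bar> \<bar>Re s\<bar> (cos \<theta>) (Re z)"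
    if "0 \<le> Im z" "Im z \<le> \<theta>" for z
    using that assms(3,1) by (rule norm_sinh_mult_bessel_kernel_le_majorant)
qed (simp_all add: assms cosh_exp_majorant_tendsto)

lemma norm_integral_sinh_bessel_kernel_le:
  assumes "0 \<le> Im s" "\<bar>Re s\<bar> \<le> A" "0 \<le> \<theta>" "\<theta> < pi / 2"
  shows "norm (integral UNIV (\<lambda>u::real. sinh (of_real u) * bessel_kernel s (of_real u)))
           \<le> 4 * powr_exp_const A * cos \<theta> powr - (1 + \<bar>Re s\<bar>) * exp (- Im s * \<theta>)"
proof -
  define g where "g u = exp (- Im s * \<theta>) * cosh_exp_majorant A \<bar>Re s\<bar> (cos \<theta>) u" for u
  define I where "I = exp (- Im s * \<theta>) * (4 * powr_exp_const A * cos \<theta> powr - (1 + \<bar>Re s\<bar>))"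
  have "0 < cos \<theta>"
    using assms by (intro cos_gt_zero_pi) auto
  then have g_int: "(g has_integral I) UNIV"
    unfolding g_def[abs_def] I_def by (intro has_integral_mult_right has_integral_cosh_exp_majorant)
  have "norm (sinh (of_real u + \<i> * of_real \<theta>) * bessel_kernel s (of_real u + \<i> * of_real \<theta>)) \<le> g u"
    for u
    using norm_sinh_mult_bessel_kernel_le[of "of_real u + \<i> * of_real \<theta>" \<theta> s A] assms
    by (simp add: g_def)
  then have "norm (integral UNIV (\<lambda>u. sinh (of_real u + \<i> * of_real \<theta>) *
                                      bessel_kernel s (of_real u + \<i> * of_real \<theta>)))
               \<le> integral UNIV g"
    using g_int sinh_bessel_kernel_horizontal_integrable[OF assms(1,3,4)]
    by (intro integral_norm_bound_integral) auto
  then show ?thesis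
    using integral_sinh_bessel_kernel_shift[OF assms(1,3,4)] integral_unique[OF g_int]
    by (simp add: I_def mult_ac)
qed

lemma norm_bessel_integral_le_of_Im_ge_2:
  assumes "2 \<le> Im s" "\<bar>Re s\<bar> \<le> A"
  shows "norm (bessel_integral s)
           \<le> 8 * exp 1 * 2 powr (1 + A) * powr_exp_const A * norm s powr \<bar>Re s\<bar> * exp (- pi * Im s / 2)"
proof -
  define t a \<theta> where "t = Im s" and "a = \<bar>Re s\<bar>" and "\<theta> = pi / 2 - 1 / t"
  \<comment> \<open>so that \<open>exp (- t * \<theta>) = e * exp (- pi * t / 2)\<close> while \<open>cos \<theta> = sin (1 / t) \<ge> 1 / (2 * t)\<close>\<close>
  have t: "0 < t" "1 / t \<le> 1 / 2" "t \<le> norm s"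
    using assms abs_Im_le_cmod[of s] by (auto simp: t_def field_simps)
  have \<theta>: "0 \<le> \<theta>" "\<theta> < pi / 2"
    using pi_ge_two t unfolding \<theta>_def by (linarith, simp)
  have "1 / (2 * t) \<le> cos \<theta>"
    using sin_ge_half[of "1 / t"] t by (simp add: \<theta>_def cos_diff)
  then have "cos \<theta> powr - (1 + a) \<le> (1 / (2 * t)) powr - (1 + a)"
    using t by (intro powr_mono2') (auto simp: a_def)
  also have "\<dots> = (2 * t) powr (1 + a)"
    using t by (simp only: powr_minus) (simp add: powr_divide)
  also have "\<dots> \<le> (2 * norm s) powr (1 + a)"
    using t by (intro powr_mono2) (auto simp: a_def)
  also have "\<dots> \<le> 2 powr (1 + A) * norm s powr (1 + a)"
    using assms by (auto simp: powr_mult a_def intro!: mult_right_mono powr_mono)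
  finally have cos_powr: "cos \<theta> powr - (1 + a) \<le> 2 powr (1 + A) * norm s powr (1 + a)" .
  have exp_eq: "exp (- t * \<theta>) = exp 1 * exp (- pi * t / 2)"
    using t by (simp add: \<theta>_def algebra_simps flip: exp_add)
  have "norm s * norm (bessel_integral s)
          = 2 * norm (integral UNIV (\<lambda>u::real. sinh (of_real u) * bessel_kernel s (of_real u)))"
    using bessel_integral_by_parts[of s] by (metis norm_mult norm_numeral)
  also have "\<dots> \<le> 2 * (4 * powr_exp_const A * cos \<theta> powr - (1 + a) * exp (- t * \<theta>))"
    using norm_integral_sinh_bessel_kernel_le[of s A \<theta>] assms \<theta> by (simp add: t_def a_def mult_ac)
  also have "\<dots> = 8 * powr_exp_const A * cos \<theta> powr - (1 + a) * (exp 1 * exp (- pi * t / 2))"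
    unfolding exp_eq by simp
  also have "\<dots> \<le> 8 * powr_exp_const A * (2 powr (1 + A) * norm s powr (1 + a)) * (exp 1 * exp (- pi * t / 2))"
    using cos_powr powr_exp_const_ge_1[of A] by (intro mult_right_mono mult_left_mono) auto
  also have "\<dots> = norm s * (8 * exp 1 * 2 powr (1 + A) * powr_exp_const A * norm s powr a * exp (- pi * t / 2))"
    using t by (simp add: powr_add mult_ac)
  finally have "norm s * norm (bessel_integral s) \<le>
      norm s * (8 * exp 1 * 2 powr (1 + A) * powr_exp_const A * norm s powr a * exp (- pi * t / 2))" .
  moreover have "0 < norm s" using t by linarith
  ultimately show ?thesis
    unfolding t_def a_def by (rule mult_left_le_imp_le)
qed

lemma norm_bessel_integral_le:
  assumes "\<bar>Re s\<bar> \<le> A"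
  shows "norm (bessel_integral s) \<le> 4 * powr_exp_const A"
proof -
  have "norm (bessel_integral s) \<le> integral UNIV (\<lambda>u. 2 * powr_exp_const A * exp (- \<bar>u\<bar>))"
    unfolding bessel_integral_def
    using bessel_kernel_absolutely_integrable[of s] norm_bessel_kernel_of_real_le[OF assms]
      has_integral_mult_exp_neg_abs
    by (intro integral_norm_bound_integral) (auto simp: absolutely_integrable_on_def)
  also have "\<dots> = 4 * powr_exp_const A"
    using integral_unique[OF has_integral_mult_exp_neg_abs] by simp
  finally show ?thesis .
qed

lemma norm_bessel_integral_le_of_abs_Im_ge_2:
  assumes "2 \<le> \<bar>Im s\<bar>" "\<bar>Re s\<bar> \<le> A"
  shows "norm (bessel_integral s) \<le> 8 * exp 1 * 2 powr (1 + A) * powr_exp_const A *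
           (norm s powr \<bar>Re s\<bar> * exp (- pi * \<bar>Im s\<bar> / 2))"
proof (cases "0 \<le> Im s")
  case True
  with assms show ?thesis
    using norm_bessel_integral_le_of_Im_ge_2[of s A] by (simp add: mult_ac)
next
  case False
  with assms show ?thesis
    using norm_bessel_integral_le_of_Im_ge_2[of "cnj s" A] by (simp add: bessel_integral_cnj mult_ac)
qed

lemma norm_bessel_integral_le_of_abs_Im_le_2:
  assumes "s \<noteq> 0" "\<bar>Im s\<bar> \<le> 2" "\<bar>Re s\<bar> \<le> A"
  shows "norm (bessel_integral s) \<le> 4 * powr_exp_const A * exp (1 + pi) *
           (norm s powr \<bar>Re s\<bar> * exp (- pi * \<bar>Im s\<bar> / 2))"
proof -
  have "exp (- 1) \<le> norm s powr \<bar>Re s\<bar>"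
    using powr_ge_exp_neg_one[of "\<bar>Re s\<bar>" "norm s"] abs_Re_le_cmod[of s] assms by simp
  moreover have "exp (- pi) \<le> exp (- pi * \<bar>Im s\<bar> / 2)"
    using assms pi_gt_zero by simp
  ultimately have "exp (- 1) * exp (- pi) \<le> norm s powr \<bar>Re s\<bar> * exp (- pi * \<bar>Im s\<bar> / 2)"
    by (intro mult_mono) auto
  then have "4 * powr_exp_const A * exp (1 + pi) * (exp (- 1) * exp (- pi))
               \<le> 4 * powr_exp_const A * exp (1 + pi) * (norm s powr \<bar>Re s\<bar> * exp (- pi * \<bar>Im s\<bar> / 2))"
    using powr_exp_const_ge_1[of A] by (intro mult_left_mono) auto
  moreover have "4 * powr_exp_const A * exp (1 + pi) * (exp (- 1) * exp (- pi)) = 4 * powr_exp_const A"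
    by (simp add: field_simps flip: exp_add)
  ultimately show ?thesis
    using norm_bessel_integral_le[OF assms(3)] by linarith
qed

lemma bessel_integral_strip_bound:
  obtains C where "\<And>s. s \<noteq> 0 \<Longrightarrow> \<bar>Re s\<bar> \<le> A \<Longrightarrow>
    norm (bessel_integral s) \<le> C * norm s powr \<bar>Re s\<bar> * exp (- pi * \<bar>Im s\<bar> / 2)"
proof -
  define C1 where "C1 = 8 * exp 1 * 2 powr (1 + A) * powr_exp_const A"
  define C2 where "C2 = 4 * powr_exp_const A * exp (1 + pi)"
  have "norm (bessel_integral s) \<le> (C1 + C2) * (norm s powr \<bar>Re s\<bar> * exp (- pi * \<bar>Im s\<bar> / 2))"
    if "s \<noteq> 0" "\<bar>Re s\<bar> \<le> A" for s
  proof -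
    define X where "X = norm s powr \<bar>Re s\<bar> * exp (- pi * \<bar>Im s\<bar> / 2)"
    have "0 \<le> C1 * X" "0 \<le> C2 * X"
      using powr_exp_const_ge_1[of A] by (auto simp: C1_def C2_def X_def)
    moreover have "norm (bessel_integral s) \<le> C1 * X \<or> norm (bessel_integral s) \<le> C2 * X"
    proof (cases "2 \<le> \<bar>Im s\<bar>")
      case True
      with that show ?thesis
        using norm_bessel_integral_le_of_abs_Im_ge_2[of s A] by (simp add: C1_def X_def)
    next
      case False
      with that show ?thesis
        using norm_bessel_integral_le_of_abs_Im_le_2[of s A] by (simp add: C2_def X_def)
    qed
    ultimately show ?thesis
      unfolding X_def[symmetric] distrib_right by linarith
  qed
  then show ?thesis
    by (intro that[of "C1 + C2"]) (simp add: mult.assoc)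
qed

section \<open>The Mellin transform of \<open>F\<close>\<close>

definition exp_cosh_tail :: "real \<Rightarrow> real" where
  "exp_cosh_tail v = integral {v..} (\<lambda>u. exp (- 2 * cosh u))"

lemma exp_cosh_absolutely_integrable_atLeast:
  "(\<lambda>u::real. exp (- 2 * cosh u)) absolutely_integrable_on {v..}"
  by (rule set_integrable_subset[OF exp_cosh_absolutely_integrable]) auto

lemma exp_cosh_integrable_atLeast: "(\<lambda>u::real. exp (- 2 * cosh u)) integrable_on {v..}"
  using exp_cosh_absolutely_integrable_atLeast by (simp add: absolutely_integrable_on_def)

lemma exp_cosh_tail_split:
  assumes "a \<le> v"
  shows "exp_cosh_tail a = integral {a..v} (\<lambda>u. exp (- 2 * cosh u)) + exp_cosh_tail v"
proof -
  have "((\<lambda>u. exp (- 2 * cosh u)) has_integral integral {a..v} (\<lambda>u. exp (- 2 * cosh u))) {a..v}"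
    by (intro integrable_integral integrable_continuous_interval continuous_intros)
  moreover have "((\<lambda>u. exp (- 2 * cosh u)) has_integral exp_cosh_tail v) {v..}"
    unfolding exp_cosh_tail_def by (intro integrable_integral exp_cosh_integrable_atLeast)
  moreover have "negligible ({a..v} \<inter> {v..})"
    by (rule negligible_subset[of "{v}"]) auto
  ultimately have "((\<lambda>u. exp (- 2 * cosh u)) has_integral
                     integral {a..v} (\<lambda>u. exp (- 2 * cosh u)) + exp_cosh_tail v) ({a..v} \<union> {v..})"
    by (rule has_integral_Un)
  moreover have "{a..v} \<union> {v..} = {a..}" using assms by auto
  ultimately show ?thesis
    unfolding exp_cosh_tail_def by (simp add: integral_unique)
qed

lemma exp_cosh_tail_has_derivative:
  "(exp_cosh_tail has_real_derivative - exp (- 2 * cosh v)) (at v)"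
proof -
  have "((\<lambda>u. integral {v - 1..u} (\<lambda>u. exp (- 2 * cosh u))) has_real_derivative exp (- 2 * cosh v))
          (at v within {v - 1..v + 1})"
    by (rule integral_has_real_derivative) (auto intro!: continuous_intros)
  then have "((\<lambda>u. integral {v - 1..u} (\<lambda>u. exp (- 2 * cosh u))) has_real_derivative exp (- 2 * cosh v))
               (at v)"
    by (simp add: at_within_Icc_at)
  then have deriv: "((\<lambda>u. exp_cosh_tail (v - 1) - integral {v - 1..u} (\<lambda>u. exp (- 2 * cosh u)))
                      has_real_derivative - exp (- 2 * cosh v)) (at v)"
    by (auto intro!: derivative_eq_intros)
  have eq: "exp_cosh_tail (v - 1) - integral {v - 1..x} (\<lambda>u. exp (- 2 * cosh u)) = exp_cosh_tail x"
    if "x \<in> {v - 1<..}" for x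
    using exp_cosh_tail_split[of "v - 1" x] that by simp
  show ?thesis
    by (rule has_field_derivative_transform_within_open[OF deriv open_greaterThan _ eq]) auto
qed

lemma exp_cosh_tail_continuous: "continuous_on UNIV exp_cosh_tail"
  by (intro continuous_at_imp_continuous_on ballI DERIV_isCont[OF exp_cosh_tail_has_derivative])

lemma exp_cosh_tail_nonneg: "0 \<le> exp_cosh_tail v"
  unfolding exp_cosh_tail_def by (intro integral_nonneg exp_cosh_integrable_atLeast) auto

lemma exp_cosh_tail_le: "exp_cosh_tail v \<le> exp_cosh_integral"
  unfolding exp_cosh_tail_def exp_cosh_integral_def
  by (rule integral_subset_le)
     (use exp_cosh_integrable_atLeast exp_cosh_absolutely_integrable in \<open>auto simp: absolutely_integrable_on_def\<close>)

lemma exp_cosh_tail_le_exp: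
  assumes "0 \<le> m" "0 \<le> v"
  shows "exp_cosh_tail v \<le> 2 * powr_exp_const m * exp (- m * v)"
proof -
  have "exp (- 2 * cosh w) \<le> 2 * powr_exp_const m * exp (- (m + 1) * w)" if "0 \<le> w" for w
  proof -
    have "exp (- 2 * cosh w) = exp (m * \<bar>w\<bar> - 2 * cosh w) * exp (- m * w)"
      using that by (simp flip: exp_add)
    also have "\<dots> \<le> 2 * powr_exp_const m * exp (- \<bar>w\<bar>) * exp (- m * w)"
      using assms by (intro mult_right_mono exp_cosh_le_exp_neg_abs) auto
    also have "\<dots> = 2 * powr_exp_const m * exp (- (m + 1) * w)"
      using that by (simp add: algebra_simps flip: exp_add)
    finally show ?thesis .
  qed
  moreover have "((\<lambda>w. 2 * powr_exp_const m * exp (- (m + 1) * w)) has_integral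
                    2 * powr_exp_const m * (exp (- (m + 1) * v) / (m + 1))) {v..}"
    using assms by (intro has_integral_mult_right has_integral_exp_minus_to_infinity) simp
  ultimately have "exp_cosh_tail v \<le> 2 * powr_exp_const m * (exp (- (m + 1) * v) / (m + 1))"
    unfolding exp_cosh_tail_def using assms
    by (intro has_integral_le[OF integrable_integral[OF exp_cosh_integrable_atLeast]]) auto
  also have "\<dots> \<le> 2 * powr_exp_const m * exp (- m * v)"
  proof -
    have "exp (- (m + 1) * v) / (m + 1) \<le> exp (- (m + 1) * v)"
      using assms by (simp add: divide_le_eq)
    also have "\<dots> \<le> exp (- m * v)"
      using assms by (simp add: algebra_simps)
    finally show ?thesis
      using powr_exp_const_ge_1[of m] by (intro mult_left_mono) auto
  qed
  finally show ?thesis .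
qed

lemma Ffun_exp: "Ffun (exp v) = exp_cosh_tail v / exp_cosh_integral"
proof -
  have "(\<lambda>u. exp u *\<^sub>R (exp (- exp u - 1 / exp u) / exp u)) = (\<lambda>u::real. exp (- 2 * cosh u))"
    by (simp add: fun_eq_iff cosh_def exp_minus inverse_eq_divide)
  then have "integral {exp v..} (\<lambda>t. exp (- t - 1 / t) / t) = exp_cosh_tail v"
    using integral_exp_substitution[of "{v..}" "\<lambda>t. exp (- t - 1 / t) / t"]
      exp_cosh_absolutely_integrable_atLeast[of v]
    by (simp add: image_exp_atLeast exp_cosh_tail_def)
  moreover have "2 * Re (besselK 0 2) = exp_cosh_integral"
    by (simp add: besselK_eq_bessel_integral bessel_integral_0)
  ultimately show ?thesis by (simp add: Ffun_def)
qed

lemma norm_mellin_tail_le: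
  assumes "0 < Re s"
  shows "norm (of_real (exp_cosh_tail v) * exp (s * of_real v))
           \<le> (exp_cosh_integral + 2 * powr_exp_const (Re s + 1)) * exp (- \<bar>min (Re s) 1 * v\<bar>)"
proof -
  have norm_eq: "norm (of_real (exp_cosh_tail v) * exp (s * of_real v)) = exp_cosh_tail v * exp (Re s * v)"
    using exp_cosh_tail_nonneg[of v] by (simp add: norm_mult)
  show ?thesis
  proof (cases "0 \<le> v")
    case True
    have "exp_cosh_tail v * exp (Re s * v)
            \<le> 2 * powr_exp_const (Re s + 1) * exp (- (Re s + 1) * v) * exp (Re s * v)"
      using assms True by (intro mult_right_mono exp_cosh_tail_le_exp) auto
    also have "\<dots> = 2 * powr_exp_const (Re s + 1) * exp (- v)"
      by (simp add: algebra_simps flip: exp_add)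
    also have "\<dots> \<le> 2 * powr_exp_const (Re s + 1) * exp (- \<bar>min (Re s) 1 * v\<bar>)"
      using assms True powr_exp_const_ge_1[of "Re s + 1"] mult_left_le_one_le[of v "Re s"]
      by (intro mult_left_mono) (auto simp: abs_mult min_def)
    also have "\<dots> \<le> (exp_cosh_integral + 2 * powr_exp_const (Re s + 1)) * exp (- \<bar>min (Re s) 1 * v\<bar>)"
      using exp_cosh_integral_pos by (intro mult_right_mono) auto
    finally show ?thesis unfolding norm_eq .
  next
    case False
    have "exp_cosh_tail v * exp (Re s * v) \<le> exp_cosh_integral * exp (- \<bar>min (Re s) 1 * v\<bar>)"
      using assms False exp_cosh_integral_pos
      by (intro mult_mono exp_cosh_tail_le) (auto simp: abs_mult min_def mult_le_cancel_right)
    also have "\<dots> \<le> (exp_cosh_integral + 2 * powr_exp_const (Re s + 1)) * exp (- \<bar>min (Re s) 1 * v\<bar>)"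
      using powr_exp_const_ge_1[of "Re s + 1"] by (intro mult_right_mono) auto
    finally show ?thesis unfolding norm_eq .
  qed
qed

lemma mellin_tail_absolutely_integrable:
  assumes "0 < Re s"
  shows "(\<lambda>v. of_real (exp_cosh_tail v) * exp (s * of_real v)) absolutely_integrable_on UNIV"
proof (rule absolutely_integrable_continuous_dominated[OF _ _ norm_mellin_tail_le[OF assms]])
  show "continuous_on UNIV (\<lambda>v. of_real (exp_cosh_tail v) * exp (s * of_real v))"
    by (intro continuous_intros continuous_on_compose2[OF continuous_on_of_real exp_cosh_tail_continuous])
       auto
  have "0 < min (Re s) 1" using assms by simp
  then show "(\<lambda>v. (exp_cosh_integral + 2 * powr_exp_const (Re s + 1)) * exp (- \<bar>min (Re s) 1 * v\<bar>))
               integrable_on UNIV"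
    using has_integral_integrable[OF has_integral_exp_neg_abs_affine[of "min (Re s) 1" 0]]
    by (intro integrable_on_mult_right) simp
qed

lemma mellin_tail_has_vector_derivative:
  "((\<lambda>v. of_real (exp_cosh_tail v) * exp (s * of_real v)) has_vector_derivative
      s * (of_real (exp_cosh_tail v) * exp (s * of_real v)) - bessel_kernel s (of_real v)) (at v)"
proof -
  have "((\<lambda>v. of_real (exp_cosh_tail v) :: complex) has_vector_derivative
          of_real (- exp (- 2 * cosh v))) (at v)"
    by (rule has_vector_derivative_of_real[OF exp_cosh_tail_has_derivative])
  moreover have "((\<lambda>v. exp (s * of_real v)) has_vector_derivative s * exp (s * of_real v)) (at v)"
    by (rule has_vector_derivative_real_field) (auto intro!: derivative_eq_intros)
  ultimately have "((\<lambda>v. of_real (exp_cosh_tail v) * exp (s * of_real v)) has_vector_derivative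
      of_real (exp_cosh_tail v) * (s * exp (s * of_real v)) +
      of_real (- exp (- 2 * cosh v)) * exp (s * of_real v)) (at v)"
    by (rule has_vector_derivative_mult)
  moreover have "bessel_kernel s (of_real v) = of_real (exp (- 2 * cosh v)) * exp (s * of_real v)"
    by (simp add: bessel_kernel_def cosh_of_real exp_diff exp_minus field_simps flip: exp_of_real)
  ultimately show ?thesis
    by (simp add: algebra_simps)
qed

lemma mellin_tail_by_parts:
  assumes "0 < Re s"
  shows "s * integral UNIV (\<lambda>v. of_real (exp_cosh_tail v) * exp (s * of_real v)) = bessel_integral s"
proof -
  define H where "H = (\<lambda>v. of_real (exp_cosh_tail v) * exp (s * of_real v))"
  define k where "k = (\<lambda>v::real. bessel_kernel s (of_real v))"
  define B where "B = (\<lambda>v. (exp_cosh_integral + 2 * powr_exp_const (Re s + 1)) * exp (- \<bar>min (Re s) 1 * v\<bar>))"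
  have H_int: "H integrable_on UNIV"
    using mellin_tail_absolutely_integrable[OF assms] by (simp add: H_def absolutely_integrable_on_def)
  have k_int: "k integrable_on UNIV"
    using bessel_kernel_absolutely_integrable by (simp add: k_def absolutely_integrable_on_def)
  have deriv: "(H has_vector_derivative s * H v - k v) (at v)" for v
    unfolding H_def k_def by (rule mellin_tail_has_vector_derivative)
  have "0 < min (Re s) 1" using assms by simp
  then have "(B \<longlongrightarrow> 0) at_top" "(B \<longlongrightarrow> 0) at_bot"
    unfolding B_def by real_asymp+
  moreover have H_lim: "(H \<longlongrightarrow> 0) F" if "(B \<longlongrightarrow> 0) F" for F
    by (rule Lim_null_comparison[OF always_eventually that])
       (use norm_mellin_tail_le[OF assms] in \<open>simp add: H_def B_def\<close>)
  ultimately have "integral UNIV (\<lambda>v. s * H v - k v) = 0 - 0"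
    by (intro integral_UNIV_derivative[OF deriv] integrable_diff integrable_on_mult_right H_int k_int H_lim)
  then show ?thesis
    using integral_diff[OF integrable_on_mult_right[OF H_int] k_int]
    by (simp add: H_def k_def bessel_integral_def)
qed

lemma Fmellin_eq:
  assumes "0 < Re s"
  shows "Fmellin s = besselK s 2 / (s * besselK 0 2)"
proof -
  define f where "f = (\<lambda>t::real. complex_of_real (Ffun t) * complex_of_real t powr (s - 1))"
  define H where "H = (\<lambda>v. of_real (exp_cosh_tail v) * exp (s * of_real v))"
  have "(\<lambda>v. exp v *\<^sub>R f (exp v)) = (\<lambda>v. of_real (1 / exp_cosh_integral) * H v)"
  proof
    fix v :: real
    have "complex_of_real (exp v) powr (s - 1) = exp ((s - 1) * of_real v)"
      by (simp add: powr_def Ln_of_real)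
    then have "exp v *\<^sub>R f (exp v) = of_real (exp_cosh_tail v / exp_cosh_integral) *
                 (complex_of_real (exp v) * exp ((s - 1) * of_real v))"
      by (simp add: f_def Ffun_exp scaleR_conv_of_real mult_ac)
    moreover have "complex_of_real (exp v) * exp ((s - 1) * of_real v) = exp (s * of_real v)"
      by (simp add: algebra_simps flip: exp_of_real exp_add)
    ultimately show "exp v *\<^sub>R f (exp v) = of_real (1 / exp_cosh_integral) * H v"
      by (simp add: H_def)
  qed
  moreover have "H absolutely_integrable_on UNIV"
    unfolding H_def by (rule mellin_tail_absolutely_integrable[OF assms])
  ultimately have "Fmellin s = of_real (1 / exp_cosh_integral) * integral UNIV H"
    using integral_exp_substitution[of UNIV f]
    by (simp add: Fmellin_def f_def image_exp_UNIV absolutely_integrable_scaleR_left)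
  also have "integral UNIV H = bessel_integral s / s"
  proof -
    have "s \<noteq> 0" using assms by auto
    with mellin_tail_by_parts[OF assms] show ?thesis
      by (simp add: H_def eq_divide_eq mult.commute)
  qed
  also have "of_real (1 / exp_cosh_integral) * (bessel_integral s / s) = besselK s 2 / (s * besselK 0 2)"
    using exp_cosh_integral_pos by (simp add: besselK_eq_bessel_integral bessel_integral_0 field_simps)
  finally show ?thesis .
qed

section \<open>Meromorphic continuation\<close>

definition Fmellin_continuation :: "complex \<Rightarrow> complex" where
  "Fmellin_continuation s = besselK s 2 / (s * besselK 0 2)"

lemma bessel_integral_0_neq_0: "bessel_integral 0 \<noteq> 0"
  using exp_cosh_integral_pos by (simp add: bessel_integral_0)

lemma Fmellin_continuation_eq:
  "Fmellin_continuation = (\<lambda>s. bessel_integral s / bessel_integral 0 / s)"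
  by (auto simp: fun_eq_iff Fmellin_continuation_def besselK_eq_bessel_integral)

lemma bessel_integral_normalized_holomorphic:
  "(\<lambda>s. bessel_integral s / bessel_integral 0) holomorphic_on UNIV"
  by (intro holomorphic_intros bessel_integral_holomorphic bessel_integral_0_neq_0)

lemma Fmellin_continuation_holomorphic: "Fmellin_continuation holomorphic_on (UNIV - {0})"
  unfolding Fmellin_continuation_eq
  by (intro holomorphic_intros holomorphic_on_subset[OF bessel_integral_normalized_holomorphic]) auto

lemma Fmellin_continuation_pole: "is_pole Fmellin_continuation 0"
proof -
  have "is_pole (\<lambda>s. bessel_integral s / bessel_integral 0 / s ^ 1) 0"
    by (rule is_pole_basic'[OF bessel_integral_normalized_holomorphic open_UNIV])
       (simp_all add: bessel_integral_0_neq_0)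
  then show ?thesis by (simp add: Fmellin_continuation_eq)
qed

lemma Fmellin_continuation_zorder: "zorder Fmellin_continuation 0 = -1"
proof -
  have "zorder (\<lambda>s. bessel_integral s / bessel_integral 0 / (s - 0) ^ 1) 0 = - 1"
    using zorder_nonzero_div_power[OF open_UNIV _ bessel_integral_normalized_holomorphic, of 0 1]
    by (simp add: bessel_integral_0_neq_0)
  then show ?thesis by (simp add: Fmellin_continuation_eq)
qed

lemma Fmellin_continuation_residue: "residue Fmellin_continuation 0 = 1"
proof -
  have "residue (\<lambda>s. bessel_integral s / bessel_integral 0 / (s - 0)) 0 = 1"
    using residue_simple[OF open_UNIV _ bessel_integral_normalized_holomorphic, of 0]
    by (simp add: bessel_integral_0_neq_0)
  then show ?thesis by (simp add: Fmellin_continuation_eq)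
qed

lemma Fmellin_continuation_minus: "Fmellin_continuation (- s) = - Fmellin_continuation s"
  by (simp add: Fmellin_continuation_def besselK_eq_bessel_integral bessel_integral_minus)

lemma norm_Fmellin_continuation_le:
  obtains C where "\<And>s. s \<noteq> 0 \<Longrightarrow> \<bar>Re s\<bar> \<le> A \<Longrightarrow>
    norm (Fmellin_continuation s) \<le> C * norm s powr (\<bar>Re s\<bar> - 1) * exp (- pi * \<bar>Im s\<bar> / 2)"
proof -
  obtain C where C: "\<And>s. s \<noteq> 0 \<Longrightarrow> \<bar>Re s\<bar> \<le> A \<Longrightarrow>
    norm (bessel_integral s) \<le> C * norm s powr \<bar>Re s\<bar> * exp (- pi * \<bar>Im s\<bar> / 2)"
    using bessel_integral_strip_bound by blast
  have "norm (Fmellin_continuation s)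
          \<le> C / exp_cosh_integral * norm s powr (\<bar>Re s\<bar> - 1) * exp (- pi * \<bar>Im s\<bar> / 2)"
    if "s \<noteq> 0" "\<bar>Re s\<bar> \<le> A" for s
  proof -
    have "norm (Fmellin_continuation s) = norm (bessel_integral s) / exp_cosh_integral / norm s"
      using exp_cosh_integral_pos
      by (simp add: Fmellin_continuation_def besselK_eq_bessel_integral bessel_integral_0 norm_divide norm_mult)
    also have "\<dots> \<le> C * norm s powr \<bar>Re s\<bar> * exp (- pi * \<bar>Im s\<bar> / 2) / exp_cosh_integral / norm s"
      using C[OF that] exp_cosh_integral_pos by (intro divide_right_mono) auto
    also have "\<dots> = C / exp_cosh_integral * norm s powr (\<bar>Re s\<bar> - 1) * exp (- pi * \<bar>Im s\<bar> / 2)"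
      using that by (simp add: powr_diff)
    finally show ?thesis .
  qed
  then show ?thesis by (rule that)
qed

theorem mainTheorem12:
  shows "(\<forall>s. Re s > 0 \<longrightarrow> Fmellin s = besselK s 2 / (s * besselK 0 2))
    \<and> (\<exists>G :: complex \<Rightarrow> complex.
         G holomorphic_on (UNIV - {0})
       \<and> (\<forall>s. Re s > 0 \<longrightarrow> G s = Fmellin s)
       \<and> is_pole G 0 \<and> zorder G 0 = -1 \<and> residue G 0 = 1
       \<and> (\<forall>s. s \<noteq> 0 \<longrightarrow> G (-s) = - G s)
       \<and> (\<forall>\<sigma>1 \<sigma>2. \<sigma>1 \<le> \<sigma>2 \<longrightarrow> (\<exists>C. \<forall>s. s \<noteq> 0 \<and> \<sigma>1 \<le> Re s \<and> Re s \<le> \<sigma>2 \<longrightarrow>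
            norm (G s) \<le> C * norm s powr (\<bar>Re s\<bar> - 1) * exp (- pi * \<bar>Im s\<bar> / 2))))"
proof -
  have bound: "\<exists>C. \<forall>s. s \<noteq> 0 \<and> \<sigma>1 \<le> Re s \<and> Re s \<le> \<sigma>2 \<longrightarrow>
      norm (Fmellin_continuation s) \<le> C * norm s powr (\<bar>Re s\<bar> - 1) * exp (- pi * \<bar>Im s\<bar> / 2)"
    for \<sigma>1 \<sigma>2 :: real
  proof -
    obtain C where "\<And>s. s \<noteq> 0 \<Longrightarrow> \<bar>Re s\<bar> \<le> max \<bar>\<sigma>1\<bar> \<bar>\<sigma>2\<bar> \<Longrightarrow>
        norm (Fmellin_continuation s) \<le> C * norm s powr (\<bar>Re s\<bar> - 1) * exp (- pi * \<bar>Im s\<bar> / 2)"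
      using norm_Fmellin_continuation_le by blast
    then show ?thesis by (intro exI[of _ C]) auto
  qed
  show ?thesis
    using Fmellin_eq Fmellin_continuation_holomorphic Fmellin_continuation_pole
      Fmellin_continuation_zorder Fmellin_continuation_residue Fmellin_continuation_minus bound
    by (intro conjI exI[of _ Fmellin_continuation]) (auto simp: Fmellin_continuation_def)
qed

end
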